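(* Suppose $(T;C_1,\dots,C_w)$ forms a $w$-wheel ($w\ge4$) with sectors $S_1,\dots,S_w$ (indices modulo $w$). Then for all $i\neq j$, the set $C(i,j)=C_i\cup T\cup C_j$ is a $\kappa$-cut that disconnects $D(i,j)$ from the rest of the graph. Moreover, if $j-i\not\equiv 1$ and $j-i\not\equiv w-1\pmod w$, then $C(i,j)$ has exactly two sides, namely $D(i,j)$ and $D(j,i)$. Furthermore $|C_i|=\frac{\kappa-|T|}{2}$ for every $i$.
   Context: $G=(V,E)$ is a finite, simple, connected, undirected, non-complete graph; $\kappa$ is its vertex connectivity. A cut is a set $U\subset V$ whose removal disconnects $G$; a $\kappa$-cut is a cut of size $\kappa$; a side of a cut is a connected component of the graph after removing it. A set $S$ disconnects $P$ from the rest of the graph if $P\ne\emptyset$, $P\cap S=\emptyset$, $V\setminus(S\cup P)\ne\emptyset$ and every path from $P$ to $V\setminus(S\cup P)$ meets $S$. Wheels: for $w\ge4$ (indices modulo $w$), if $V$ is partitioned into pairwise disjoint sets $T,C_1,\dots,C_w,S_1,\dots,S_w$ with all $C_i,S_i$ nonempty ($T$ may be empty) such that for every $i$ the set $C_i\cup T\cup C_{i+2}$ is a $\kappa$-cut that disconnects $S_i\cup C_{i+1}\cup S_{i+1}$ from the rest of the graph, then $(T;C_1,\dots,C_w)$ forms a $w$-wheel with sectors $S_1,\dots,S_w$ (center $T$, spokes $C_i$). For $i\ne j$, $C(i,j)=C_i\cup T\cup C_j$ and $D(i,j)=S_i\cup C_{i+1}\cup S_{i+1}\cup\cdots\cup C_{j-1}\cup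 S_{j-1}$ (going cyclically from $i$ to $j-1$; in particular $D(i,i+1)=S_i$). *)

theory Defs
  imports "HOL.Complex_Main"
begin

definition simple_graph :: "'a set \<Rightarrow> ('a \<times> 'a) set \<Rightarrow> bool" where
  "simple_graph V E \<longleftrightarrow> finite V \<and> E \<subseteq> V \<times> V \<and> sym E \<and> (\<forall>x. (x, x) \<notin> E)"

definition reach_in :: "('a \<times> 'a) set \<Rightarrow> 'a set \<Rightarrow> 'a \<Rightarrow> 'a \<Rightarrow> bool" where
  "reach_in E W x y \<longleftrightarrow> x \<in> W \<and> y \<in> W \<and> (x, y) \<in> (E \<inter> (W \<times> W))\<^sup>*"

definition connected_on :: "('a \<times> 'a) set \<Rightarrow> 'a set \<Rightarrow> bool" where
  "connected_on E W \<longleftrightarrow> W \<noteq> {} \<and> (\<forall>x\<in>W. \<forall>y\<in>W. reach_in E W x y)"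

definition components_on :: "('a \<times> 'a) set \<Rightarrow> 'a set \<Rightarrow> 'a set set" where
  "components_on E W = {{y. reach_in E W x y} | x. x \<in> W}"

definition complete_graph :: "'a set \<Rightarrow> ('a \<times> 'a) set \<Rightarrow> bool" where
  "complete_graph V E \<longleftrightarrow> (\<forall>x\<in>V. \<forall>y\<in>V. x \<noteq> y \<longrightarrow> (x, y) \<in> E)"

definition is_cut :: "'a set \<Rightarrow> ('a \<times> 'a) set \<Rightarrow> 'a set \<Rightarrow> bool" where
  "is_cut V E U \<longleftrightarrow> U \<subset> V \<and> \<not> connected_on E (V - U)"

text \<open>Vertex connectivity (of a non-complete graph): minimum size of a cut.\<close>
definition kappa :: "'a set \<Rightarrow> ('a \<times> 'a) set \<Rightarrow> nat" where
  "kappa V E = Min (card ` {U. is_cut V E U})"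

definition kappa_cut :: "'a set \<Rightarrow> ('a \<times> 'a) set \<Rightarrow> 'a set \<Rightarrow> bool" where
  "kappa_cut V E U \<longleftrightarrow> is_cut V E U \<and> card U = kappa V E"

definition sides :: "'a set \<Rightarrow> ('a \<times> 'a) set \<Rightarrow> 'a set \<Rightarrow> 'a set set" where
  "sides V E U = components_on E (V - U)"

definition disconnects :: "'a set \<Rightarrow> ('a \<times> 'a) set \<Rightarrow> 'a set \<Rightarrow> 'a set \<Rightarrow> bool" where
  "disconnects V E S P \<longleftrightarrow> P \<noteq> {} \<and> P \<subseteq> V \<and> P \<inter> S = {} \<and> V - (S \<union> P) \<noteq> {} \<and>
     (\<forall>x\<in>P. \<forall>y\<in>V - (S \<union> P). \<not> reach_in E (V - S) x y)"

definition CC :: "nat \<Rightarrow> 'a set \<Rightarrow> (nat \<Rightarrow> 'a set) \<Rightarrow> nat \<Rightarrow> nat \<Rightarrow> 'a set" where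
  "CC w T C i j = C (i mod w) \<union> T \<union> C (j mod w)"

text \<open>D(i,j) = S_i \<union> C_{i+1} \<union> S_{i+1} \<union> ... \<union> C_{j-1} \<union> S_{j-1}, cyclically.\<close>
definition DD :: "nat \<Rightarrow> (nat \<Rightarrow> 'a set) \<Rightarrow> (nat \<Rightarrow> 'a set) \<Rightarrow> nat \<Rightarrow> nat \<Rightarrow> 'a set" where
  "DD w C S i j =
     (let m = (j mod w + w - i mod w) mod w in
      (\<Union>k\<in>{..<m}. S ((i + k) mod w)) \<union> (\<Union>k\<in>{1..<m}. C ((i + k) mod w)))"

definition is_wheel :: "'a set \<Rightarrow> ('a \<times> 'a) set \<Rightarrow> nat \<Rightarrow> 'a set \<Rightarrow> (nat \<Rightarrow> 'a set)
     \<Rightarrow> (nat \<Rightarrow> 'a set) \<Rightarrow> bool" where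
  "is_wheel V E w T C S \<longleftrightarrow>
     w \<ge> 4 \<and>
     V = T \<union> (\<Union>i\<in>{..<w}. C i) \<union> (\<Union>i\<in>{..<w}. S i) \<and>
     (\<forall>i<w. C i \<noteq> {} \<and> S i \<noteq> {} \<and> T \<inter> C i = {} \<and> T \<inter> S i = {}) \<and>
     (\<forall>i<w. \<forall>j<w. i \<noteq> j \<longrightarrow> C i \<inter> C j = {} \<and> S i \<inter> S j = {}) \<and>
     (\<forall>i<w. \<forall>j<w. C i \<inter> S j = {}) \<and>
     (\<forall>i<w. kappa_cut V E (CC w T C i (i + 2)) \<and>
        disconnects V E (CC w T C i (i + 2))
          (S i \<union> C ((i + 1) mod w) \<union> S ((i + 1) mod w)))"

end

theory Submission
  imports Defs
begin

text \<open>Each cut \<open>C(k, k + 2)\<close> of the wheel confines the neighbourhood of its side, and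
  intersecting two consecutive such constraints shows that a sector \<open>S\<^sub>a\<close> only sees \<open>S\<^sub>a\<close>,
  \<open>C\<^sub>a\<close>, \<open>C\<^sub>a\<^sub>+\<^sub>1\<close> and \<open>T\<close>. Hence \<open>D(i, j)\<close> is closed under edges avoiding \<open>C(i, j)\<close>, so
  \<open>C(i, j)\<close> is a cut and \<open>\<kappa> \<le> |C\<^sub>i| + |T| + |C\<^sub>j|\<close>. Comparing these bounds with the \<open>\<kappa>\<close>-cuts
  \<open>C(k, k + 2)\<close> gives \<open>|C\<^sub>k| = |C\<^sub>k\<^sub>+\<^sub>1|\<close>, so every spoke has \<open>(\<kappa> - |T|) / 2\<close> vertices and every
  \<open>C(i, j)\<close> is a \<open>\<kappa>\<close>-cut.

  For the sides: the part of the spokes next to a sector that is reachable from it, together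
  with \<open>T\<close>, would otherwise be a cut smaller than \<open>\<kappa>\<close>. So consecutive sectors are joined
  through their common spoke, \<open>D(i, j)\<close> is connected as soon as it contains a whole spoke,
  and \<open>D(i, j)\<close>, \<open>D(j, i)\<close> cover everything outside \<open>C(i, j)\<close>.\<close>

lemma reach_in_refl: "x \<in> W \<Longrightarrow> reach_in E W x x"
  by (simp add: reach_in_def)

lemma reach_in_edge: "x \<in> W \<Longrightarrow> y \<in> W \<Longrightarrow> (x, y) \<in> E \<Longrightarrow> reach_in E W x y"
  unfolding reach_in_def by (auto intro: r_into_rtrancl)

lemma reach_in_trans: "reach_in E W x y \<Longrightarrow> reach_in E W y z \<Longrightarrow> reach_in E W x z"
  unfolding reach_in_def by (meson rtrancl_trans)

lemma reach_in_sym: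
  assumes "sym E" "reach_in E W x y"
  shows "reach_in E W y x"
proof -
  have "sym ((E \<inter> W \<times> W)\<^sup>*)"
    using assms(1) by (intro sym_rtrancl) (auto simp: sym_def)
  with assms(2) show ?thesis
    unfolding reach_in_def by (auto dest: symD)
qed

lemma reach_in_closed:
  assumes "reach_in E W x y" "x \<in> X"
    and "\<And>a b. a \<in> X \<Longrightarrow> b \<in> W \<Longrightarrow> (a, b) \<in> E \<Longrightarrow> b \<in> X"
  shows "y \<in> X"
proof -
  from assms(1) have "(x, y) \<in> (E \<inter> W \<times> W)\<^sup>*"
    by (simp add: reach_in_def)
  then show ?thesis
    using assms(2) by induction (auto intro: assms(3))
qed

definition linked_in :: "('a \<times> 'a) set \<Rightarrow> 'a set \<Rightarrow> 'a set \<Rightarrow> bool" where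
  "linked_in E W A \<longleftrightarrow> (\<forall>x\<in>A. \<forall>y\<in>A. reach_in E W x y)"

lemma linked_in_subset: "linked_in E W A \<Longrightarrow> B \<subseteq> A \<Longrightarrow> linked_in E W B"
  by (auto simp: linked_in_def)

lemma linked_in_Un:
  assumes "linked_in E W A" "linked_in E W B" "A \<inter> B \<noteq> {}"
  shows "linked_in E W (A \<union> B)"
proof -
  obtain c where "c \<in> A" "c \<in> B"
    using assms(3) by blast
  then show ?thesis
    using assms(1,2) unfolding linked_in_def by (blast intro: reach_in_trans)
qed

lemma reach_class_eq:
  assumes "linked_in E W A" "x \<in> A"
    and "\<And>a b. a \<in> A \<Longrightarrow> b \<in> W \<Longrightarrow> (a, b) \<in> E \<Longrightarrow> b \<in> A"
  shows "{y. reach_in E W x y} = A"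
  using assms reach_in_closed[of E W x _ A] unfolding linked_in_def by blast

lemma components_on_eq_pair:
  assumes "W = A \<union> B" "A \<noteq> {}" "B \<noteq> {}"
    and "linked_in E W A" "\<And>a b. a \<in> A \<Longrightarrow> b \<in> W \<Longrightarrow> (a, b) \<in> E \<Longrightarrow> b \<in> A"
    and "linked_in E W B" "\<And>a b. a \<in> B \<Longrightarrow> b \<in> W \<Longrightarrow> (a, b) \<in> E \<Longrightarrow> b \<in> B"
  shows "components_on E W = {A, B}"
proof -
  have A: "{y. reach_in E W x y} = A" if "x \<in> A" for x
    using assms(4) that assms(5) by (rule reach_class_eq)
  have B: "{y. reach_in E W x y} = B" if "x \<in> B" for x
    using assms(6) that assms(7) by (rule reach_class_eq)
  have "{{y. reach_in E W x y} | x. x \<in> W} = (\<lambda>x. {y. reach_in E W x y}) ` (A \<union> B)"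
    using assms(1) by blast
  also have "\<dots> = {A, B}"
    using A B assms(2,3) by (auto simp: image_Un)
  finally show ?thesis
    by (simp add: components_on_def)
qed

lemma kappa_le_card_cut:
  assumes "finite V" "is_cut V E U"
  shows "kappa V E \<le> card U"
proof -
  have "{U. is_cut V E U} \<subseteq> Pow V"
    by (auto simp: is_cut_def)
  then have "finite {U. is_cut V E U}"
    using assms(1) by (meson finite_Pow_iff finite_subset)
  then show ?thesis
    unfolding kappa_def using assms(2) by (intro Min_le) auto
qed

lemma is_cut_if_disconnects: "disconnects V E U P \<Longrightarrow> U \<subseteq> V \<Longrightarrow> is_cut V E U"
  unfolding is_cut_def connected_on_def disconnects_def by blast

lemma disconnectsI:
  assumes "P \<noteq> {}" "P \<subseteq> V - U" "V - (U \<union> P) \<noteq> {}"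
    and "\<And>x y. x \<in> P \<Longrightarrow> y \<in> V - U \<Longrightarrow> (x, y) \<in> E \<Longrightarrow> y \<in> P"
  shows "disconnects V E U P"
  unfolding disconnects_def using assms reach_in_closed[of E "V - U" _ _ P] by blast

lemma disconnects_edge:
  assumes "simple_graph V E" "disconnects V E U P" "x \<in> P" "(x, y) \<in> E"
  shows "y \<in> U \<union> P"
proof (rule ccontr)
  assume y: "y \<notin> U \<union> P"
  have "x \<in> V - U" "y \<in> V"
    using assms by (auto simp: simple_graph_def disconnects_def)
  then have "reach_in E (V - U) x y"
    using y assms(4) by (intro reach_in_edge) auto
  then show False
    using assms(2,3) y \<open>y \<in> V\<close> by (auto simp: disconnects_def)
qed

lemma add_mod_eq_imp_eq:
  assumes "(i + k) mod w = (i + k') mod (w::nat)" "k < w" "k' < w"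
  shows "k = k'"
proof -
  have le: "b \<le> a" if "a \<le> b" "(i + a) mod w = (i + b) mod w" "b < w" for a b
  proof -
    have "w dvd b - a"
      using that(1,2) mod_eq_dvd_iff_nat[of "i + a" "i + b" w] by simp
    then show ?thesis
      using that(1,3) by (metis diff_is_0_eq dvd_imp_le le_trans not_le zero_less_diff diff_le_self)
  qed
  show ?thesis
    using le[of k k'] le[of k' k] assms by linarith
qed

lemma mod_neq_if_less_add:
  assumes "k < l" "l < k + (w::nat)"
  shows "k mod w \<noteq> l mod w"
proof
  assume "k mod w = l mod w"
  then have "(k + 0) mod w = (k + (l - k)) mod w"
    using assms(1) by simp
  then have "0 = l - k"
    by (rule add_mod_eq_imp_eq) (use assms in auto)
  then show False
    using assms(1) by simp
qed

lemma mod_sub_eq_cases: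
  assumes "a < w" "b < (w::nat)"
  shows "(b + w - a) mod w = (if a \<le> b then b - a else b + w - a)"
proof (cases "a \<le> b")
  case True
  then have "(b + w - a) mod w = (b - a + w) mod w"
    by simp
  also have "\<dots> = b - a"
    using assms by simp
  finally show ?thesis
    using True by simp
qed (use assms in simp)

lemma mod_sub_pos: "a < w \<Longrightarrow> b < (w::nat) \<Longrightarrow> a \<noteq> b \<Longrightarrow> 0 < (b + w - a) mod w"
  by (simp add: mod_sub_eq_cases)

lemma mod_sub_swap:
  "a < w \<Longrightarrow> b < (w::nat) \<Longrightarrow> a \<noteq> b \<Longrightarrow> (a + w - b) mod w = w - (b + w - a) mod w"
  by (auto simp: mod_sub_eq_cases)

lemma add_mod_sub: "a < w \<Longrightarrow> b < (w::nat) \<Longrightarrow> (a + (b + w - a) mod w) mod w = b"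
  by (simp add: mod_sub_eq_cases)

section \<open>Spokes, sectors and arcs of a wheel\<close>

locale wheel =
  fixes V :: "'a set" and E :: "('a \<times> 'a) set" and w :: nat and T :: "'a set"
    and C S :: "nat \<Rightarrow> 'a set"
  assumes simple: "simple_graph V E"
    and wheel: "is_wheel V E w T C S"
begin

definition spoke :: "nat \<Rightarrow> 'a set" where
  "spoke k = C (k mod w)"

definition sector :: "nat \<Rightarrow> 'a set" where
  "sector k = S (k mod w)"

text \<open>\<open>arc i m\<close> is the set \<open>D(i, i + m)\<close> of the paper.\<close>
definition arc :: "nat \<Rightarrow> nat \<Rightarrow> 'a set" where
  "arc i m = (\<Union>k<m. sector (i + k)) \<union> (\<Union>k\<in>{1..<m}. spoke (i + k))"

definition offset :: "nat \<Rightarrow> nat \<Rightarrow> nat" where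
  "offset i j = (j mod w + w - i mod w) mod w"

lemma CC_eq_spokes: "CC w T C i j = spoke i \<union> T \<union> spoke j"
  by (simp add: CC_def spoke_def)

lemma DD_eq_arc: "DD w C S i j = arc i (offset i j)"
  by (simp add: DD_def arc_def offset_def spoke_def sector_def Let_def)

lemma four_le_w: "4 \<le> w"
  using wheel by (simp add: is_wheel_def)

lemma finite_V: "finite V"
  using simple by (simp add: simple_graph_def)

lemma sym_E: "sym E"
  using simple by (simp add: simple_graph_def)

lemma spoke_mod_add [simp]: "spoke (i mod w + k) = spoke (i + k)"
  by (simp add: spoke_def mod_add_left_eq)

lemma sector_mod_add [simp]: "sector (i mod w + k) = sector (i + k)"
  by (simp add: sector_def mod_add_left_eq)

lemma spoke_add_w [simp]: "spoke (k + w) = spoke k"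
  by (simp add: spoke_def)

lemma sector_add_w [simp]: "sector (k + w) = sector k"
  by (simp add: sector_def)

lemma wheel_parts:
  "k < w \<Longrightarrow> C k \<noteq> {} \<and> S k \<noteq> {} \<and> T \<inter> C k = {} \<and> T \<inter> S k = {}"
  "k < w \<Longrightarrow> l < w \<Longrightarrow> k \<noteq> l \<Longrightarrow> C k \<inter> C l = {} \<and> S k \<inter> S l = {}"
  "k < w \<Longrightarrow> l < w \<Longrightarrow> C k \<inter> S l = {}"
  "V = T \<union> (\<Union>k<w. C k) \<union> (\<Union>k<w. S k)"
  using wheel by (auto simp: is_wheel_def)

lemma mod_w_less: "k mod w < w"
  using four_le_w by simp

lemma spoke_nonempty: "spoke k \<noteq> {}"
  using wheel_parts(1)[OF mod_w_less] by (simp add: spoke_def)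

lemma sector_nonempty: "sector k \<noteq> {}"
  using wheel_parts(1)[OF mod_w_less] by (simp add: sector_def)

lemma T_disjoint_spoke: "T \<inter> spoke k = {}"
  using wheel_parts(1)[OF mod_w_less] by (simp add: spoke_def)

lemma T_disjoint_sector: "T \<inter> sector k = {}"
  using wheel_parts(1)[OF mod_w_less] by (simp add: sector_def)

lemma spoke_disjoint_sector: "spoke k \<inter> sector l = {}"
  using wheel_parts(3)[OF mod_w_less mod_w_less] by (simp add: spoke_def sector_def)

lemma spoke_disjoint: "k mod w \<noteq> l mod w \<Longrightarrow> spoke k \<inter> spoke l = {}"
  using wheel_parts(2)[OF mod_w_less mod_w_less] by (simp add: spoke_def)

lemma sector_disjoint: "k mod w \<noteq> l mod w \<Longrightarrow> sector k \<inter> sector l = {}"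
  using wheel_parts(2)[OF mod_w_less mod_w_less] by (simp add: sector_def)

lemma spoke_offsets_disjoint: "k < w \<Longrightarrow> l < w \<Longrightarrow> k \<noteq> l \<Longrightarrow> spoke (i + k) \<inter> spoke (i + l) = {}"
  using spoke_disjoint add_mod_eq_imp_eq by blast

lemma sector_offsets_disjoint: "k < w \<Longrightarrow> l < w \<Longrightarrow> k \<noteq> l \<Longrightarrow> sector (i + k) \<inter> sector (i + l) = {}"
  using sector_disjoint add_mod_eq_imp_eq by blast

lemma T_subset_V: "T \<subseteq> V"
  using wheel_parts(4) by blast

lemma spoke_subset_V: "spoke k \<subseteq> V"
  using wheel_parts(4) mod_w_less by (auto simp: spoke_def)

lemma sector_subset_V: "sector k \<subseteq> V"
  using wheel_parts(4) mod_w_less by (auto simp: sector_def)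

lemma finite_spoke: "finite (spoke k)"
  using finite_V spoke_subset_V by (rule finite_subset[rotated])

lemma offset_less: "offset i j < w"
  using four_le_w by (simp add: offset_def)

lemma offset_pos: "i mod w \<noteq> j mod w \<Longrightarrow> 0 < offset i j"
  unfolding offset_def using mod_sub_pos mod_w_less by blast

lemma offset_swap: "i mod w \<noteq> j mod w \<Longrightarrow> offset j i = w - offset i j"
  unfolding offset_def using mod_sub_swap mod_w_less by blast

lemma add_offset_mod: "(i + offset i j) mod w = j mod w"
proof -
  have "(i + offset i j) mod w = (i mod w + offset i j) mod w"
    by (simp add: mod_add_left_eq)
  also have "\<dots> = j mod w"
    unfolding offset_def using add_mod_sub mod_w_less by blast
  finally show ?thesis .
qed

lemma spoke_add_offset [simp]: "spoke (i + offset i j) = spoke j"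
  using add_offset_mod by (simp add: spoke_def)

lemma V_eq: "V = T \<union> (\<Union>k<w. spoke (i + k) \<union> sector (i + k))"
proof
  show "V \<subseteq> T \<union> (\<Union>k<w. spoke (i + k) \<union> sector (i + k))"
  proof
    fix x assume "x \<in> V"
    then consider "x \<in> T" | l where "l < w" "x \<in> C l \<union> S l"
      using wheel_parts(4) by blast
    then show "x \<in> T \<union> (\<Union>k<w. spoke (i + k) \<union> sector (i + k))"
    proof cases
      case 2
      then have "x \<in> spoke (i + offset i l) \<union> sector (i + offset i l)"
        using add_offset_mod[of i l] by (simp add: spoke_def sector_def)
      then show ?thesis
        using offset_less by blast
    qed simp
  qed
  show "T \<union> (\<Union>k<w. spoke (i + k) \<union> sector (i + k)) \<subseteq> V"
    using T_subset_V spoke_subset_V sector_subset_V by blast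
qed

lemma kappa_cut_two_apart: "kappa_cut V E (spoke k \<union> T \<union> spoke (k + 2))"
  and disconnects_two_apart:
    "disconnects V E (spoke k \<union> T \<union> spoke (k + 2)) (sector k \<union> spoke (k + 1) \<union> sector (k + 1))"
proof -
  have "kappa_cut V E (CC w T C (k mod w) (k mod w + 2)) \<and>
      disconnects V E (CC w T C (k mod w) (k mod w + 2))
        (S (k mod w) \<union> C ((k mod w + 1) mod w) \<union> S ((k mod w + 1) mod w))"
    using wheel mod_w_less[of k] unfolding is_wheel_def by blast
  moreover have "CC w T C (k mod w) (k mod w + 2) = spoke k \<union> T \<union> spoke (k + 2)"
    by (simp only: CC_def spoke_def mod_add_left_eq mod_mod_trivial)
  moreover have "S (k mod w) \<union> C ((k mod w + 1) mod w) \<union> S ((k mod w + 1) mod w)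
      = sector k \<union> spoke (k + 1) \<union> sector (k + 1)"
    by (simp only: spoke_def sector_def mod_add_left_eq)
  ultimately show "kappa_cut V E (spoke k \<union> T \<union> spoke (k + 2))"
    "disconnects V E (spoke k \<union> T \<union> spoke (k + 2)) (sector k \<union> spoke (k + 1) \<union> sector (k + 1))"
    by simp_all
qed

lemma spoke_neighbour:
  "x \<in> spoke (k + 1) \<Longrightarrow> (x, y) \<in> E \<Longrightarrow>
    y \<in> spoke k \<union> T \<union> spoke (k + 2) \<union> sector k \<union> spoke (k + 1) \<union> sector (k + 1)"
  using disconnects_edge[OF simple disconnects_two_apart] by blast

text \<open>Sector \<open>a\<close> lies inside both cuts through spokes \<open>a - 1, a + 1\<close> and \<open>a, a + 2\<close>;
  intersecting the two permitted neighbourhoods needs \<open>w \<ge> 4\<close>, so that spoke \<open>a - 1\<close>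
  differs from spoke \<open>a + 2\<close>.\<close>
lemma sector_neighbour:
  assumes "x \<in> sector a" "(x, y) \<in> E"
  shows "y \<in> sector a \<union> spoke a \<union> spoke (a + 1) \<union> T"
proof -
  define k where "k = a + w - 1"
  have "k + 1 = a + w" "k + 2 = (a + 1) + w"
    using four_le_w by (simp_all add: k_def)
  then have k: "sector (k + 1) = sector a" "spoke (k + 1) = spoke a" "spoke (k + 2) = spoke (a + 1)"
    by (simp_all only: spoke_add_w sector_add_w)
  have x: "x \<in> sector (k + 1)"
    using assms(1) k by simp
  have shift: "k + 1 + 2 = k + 3" "k + 1 + 1 = k + 2"
    by simp_all
  have "y \<in> (spoke k \<union> T \<union> spoke (k + 2)) \<union> (sector k \<union> spoke (k + 1) \<union> sector (k + 1))"
    using disconnects_edge[OF simple disconnects_two_apart[of k]] x assms(2) by blast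
  moreover have "y \<in> (spoke (k + 1) \<union> T \<union> spoke (k + 3)) \<union> (sector (k + 1) \<union> spoke (k + 2) \<union> sector (k + 2))"
    using disconnects_edge[OF simple disconnects_two_apart[of "k + 1", unfolded shift]] x assms(2) by blast
  moreover have "spoke (k + 3) \<inter> spoke k = {}" "spoke (k + 3) \<inter> spoke (k + 1) = {}"
    "spoke (k + 3) \<inter> spoke (k + 2) = {}" "sector (k + 2) \<inter> sector k = {}"
    "sector (k + 2) \<inter> sector (k + 1) = {}"
    using spoke_offsets_disjoint[of 3 0 k] spoke_offsets_disjoint[of 3 1 k]
      spoke_offsets_disjoint[of 3 2 k] sector_offsets_disjoint[of 2 0 k]
      sector_offsets_disjoint[of 2 1 k] four_le_w
    by simp_all
  ultimately have "y \<in> sector (k + 1) \<union> spoke (k + 1) \<union> spoke (k + 2) \<union> T"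
    using T_disjoint_spoke T_disjoint_sector spoke_disjoint_sector by blast
  then show ?thesis
    by (simp only: k)
qed

lemma sector_subset_arc: "k < m \<Longrightarrow> sector (i + k) \<subseteq> arc i m"
  by (auto simp: arc_def)

lemma spoke_subset_arc: "0 < k \<Longrightarrow> k < m \<Longrightarrow> spoke (i + k) \<subseteq> arc i m"
  by (auto simp: arc_def)

lemma spoke_subset_arc_ends: "k \<le> m \<Longrightarrow> spoke (i + k) \<subseteq> arc i m \<union> spoke i \<union> spoke (i + m)"
  using spoke_subset_arc[of k m i] by (cases "k = 0 \<or> k = m") auto

lemma arc_subset_V: "arc i m \<subseteq> V"
  using spoke_subset_V sector_subset_V by (auto simp: arc_def)

lemma arc_one: "arc i 1 = sector i"
  by (simp add: arc_def lessThan_Suc)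

lemma arc_Suc: "0 < m \<Longrightarrow> arc i (Suc m) = arc i m \<union> spoke (i + m) \<union> sector (i + m)"
  by (auto simp: arc_def lessThan_Suc atLeastLessThanSuc)

lemma arc_mod: "arc (i mod w) m = arc i m"
  by (simp add: arc_def)

lemma arcE:
  assumes "x \<in> arc i m"
  obtains (sector) k where "k < m" "x \<in> sector (i + k)"
    | (spoke) k where "0 < k" "k < m" "x \<in> spoke (i + k)"
  using assms by (force simp: arc_def Suc_le_eq)

lemma arc_disjoint_ends:
  assumes "m < w"
  shows "arc i m \<inter> (spoke i \<union> T \<union> spoke (i + m)) = {}"
proof -
  have "x \<notin> spoke i \<union> T \<union> spoke (i + m)" if "x \<in> arc i m" for x
    using that
  proof (cases rule: arcE)
    case (spoke k)
    then show ?thesis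
      using spoke_offsets_disjoint[of k 0 i] spoke_offsets_disjoint[of k m i] T_disjoint_spoke assms
      by auto
  qed (use T_disjoint_sector spoke_disjoint_sector in blast)
  then show ?thesis
    by blast
qed

lemma sector_end_disjoint_arc:
  assumes "m < w"
  shows "sector (i + m) \<inter> arc i m = {}"
proof -
  have "x \<notin> sector (i + m)" if "x \<in> arc i m" for x
    using that
  proof (cases rule: arcE)
    case (sector k)
    then show ?thesis
      using sector_offsets_disjoint[of k m i] assms by auto
  qed (use spoke_disjoint_sector in blast)
  then show ?thesis
    by blast
qed

lemma arc_closed:
  assumes x: "x \<in> arc i m" and edge: "(x, y) \<in> E" and y: "y \<notin> spoke i \<union> T \<union> spoke (i + m)"
  shows "y \<in> arc i m"
proof -
  have ends: "y \<in> spoke (i + k) \<Longrightarrow> k \<le> m \<Longrightarrow> y \<in> arc i m" for k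
    using spoke_subset_arc_ends[of k m i] y by blast
  from x show ?thesis
  proof (cases rule: arcE)
    case (sector k)
    then have "y \<in> sector (i + k) \<union> spoke (i + k) \<union> spoke (i + k + 1) \<union> T"
      using sector_neighbour edge by blast
    then show ?thesis
      using ends[of k] ends[of "k + 1"] sector_subset_arc[of k m i] sector y by auto
  next
    case (spoke k)
    then obtain l where l: "k = l + 1"
      by (metis Suc_eq_plus1 gr0_conv_Suc)
    then have "y \<in> spoke (i + l) \<union> T \<union> spoke (i + l + 2) \<union> sector (i + l)
        \<union> spoke (i + l + 1) \<union> sector (i + l + 1)"
      using spoke_neighbour[of x "i + l" y] spoke edge by (simp add: add.assoc)
    then show ?thesis
      using ends[of l] ends[of "l + 1"] ends[of "l + 2"] sector_subset_arc[of l m i]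
        sector_subset_arc[of "l + 1" m i] spoke l y
      by (auto simp: add.assoc)
  qed
qed

lemma disconnects_arc:
  assumes "0 < m" "m < w"
  shows "disconnects V E (spoke i \<union> T \<union> spoke (i + m)) (arc i m)"
proof (rule disconnectsI)
  show "arc i m \<noteq> {}"
    using sector_subset_arc[of 0 m i] sector_nonempty[of i] assms by auto
  show "arc i m \<subseteq> V - (spoke i \<union> T \<union> spoke (i + m))"
    using arc_subset_V arc_disjoint_ends[OF assms(2)] by blast
  show "V - (spoke i \<union> T \<union> spoke (i + m) \<union> arc i m) \<noteq> {}"
    using sector_nonempty[of "i + m"] sector_subset_V[of "i + m"] sector_end_disjoint_arc[OF assms(2)]
      T_disjoint_sector spoke_disjoint_sector by blast
qed (use arc_closed in blast)

section \<open>The sizes of the spokes\<close>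

lemma is_cut_ends:
  assumes "a mod w \<noteq> b mod w"
  shows "is_cut V E (spoke a \<union> T \<union> spoke b)"
proof -
  have "disconnects V E (spoke a \<union> T \<union> spoke (a + offset a b)) (arc a (offset a b))"
    using offset_pos[OF assms] offset_less by (rule disconnects_arc)
  then show ?thesis
    using spoke_subset_V T_subset_V by (auto intro: is_cut_if_disconnects)
qed

lemma card_ends:
  assumes "a mod w \<noteq> b mod w"
  shows "card (spoke a \<union> T \<union> spoke b) = card (spoke a) + card T + card (spoke b)"
proof -
  have T: "finite T"
    using T_subset_V finite_V by (rule finite_subset)
  have "card (spoke a \<union> T) = card (spoke a) + card T"
    using finite_spoke T T_disjoint_spoke by (subst card_Un_disjoint) auto
  moreover have "card (spoke a \<union> T \<union> spoke b) = card (spoke a \<union> T) + card (spoke b)"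
    using finite_spoke T T_disjoint_spoke spoke_disjoint[OF assms] by (subst card_Un_disjoint) auto
  ultimately show ?thesis
    by simp
qed

lemma kappa_le_ends:
  "a mod w \<noteq> b mod w \<Longrightarrow> kappa V E \<le> card (spoke a) + card T + card (spoke b)"
  using kappa_le_card_cut[OF finite_V is_cut_ends] card_ends by simp

lemma kappa_two_apart: "kappa V E = card (spoke k) + card T + card (spoke (k + 2))"
  using kappa_cut_two_apart[of k] card_ends mod_neq_if_less_add[of k "k + 2"] four_le_w
  by (simp add: kappa_cut_def)

text \<open>Compare the minimum cuts through spokes \<open>k, k + 2\<close> and \<open>k + 1, k + 3\<close> with the
  cuts through \<open>k, k + 3\<close> and \<open>k + 1, k + 2\<close>.\<close>
lemma card_spoke_next: "card (spoke (k + 1)) = card (spoke k)"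
proof -
  have shift: "k + 1 + 2 = k + 3"
    by simp
  have "kappa V E = card (spoke k) + card T + card (spoke (k + 2))"
    by (rule kappa_two_apart)
  moreover have "kappa V E = card (spoke (k + 1)) + card T + card (spoke (k + 3))"
    using kappa_two_apart[of "k + 1"] unfolding shift .
  moreover have "kappa V E \<le> card (spoke k) + card T + card (spoke (k + 3))"
    using four_le_w by (intro kappa_le_ends mod_neq_if_less_add) auto
  moreover have "kappa V E \<le> card (spoke (k + 1)) + card T + card (spoke (k + 2))"
    using four_le_w by (intro kappa_le_ends mod_neq_if_less_add) auto
  ultimately show ?thesis
    by linarith
qed

lemma card_spoke: "2 * card (spoke k) + card T = kappa V E"
proof -
  have "k + 1 + 1 = k + 2"
    by simp
  then have "card (spoke (k + 2)) = card (spoke k)"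
    using card_spoke_next[of k] card_spoke_next[of "k + 1"] by simp
  then show ?thesis
    using kappa_two_apart[of k] by simp
qed

lemma kappa_cut_ends: "a mod w \<noteq> b mod w \<Longrightarrow> kappa_cut V E (spoke a \<union> T \<union> spoke b)"
  using is_cut_ends card_ends card_spoke[of a] card_spoke[of b] by (simp add: kappa_cut_def)

section \<open>The sides of the cuts\<close>

text \<open>The vertices of the two spokes at sector \<open>a\<close> that lie in \<open>U\<close> or are reached from \<open>v\<close>
  form, together with \<open>T\<close>, a set separating \<open>v\<close> from sector \<open>a + 2\<close>. As both spokes have
  \<open>(\<kappa> - |T|) / 2\<close> vertices, minimality of \<open>\<kappa>\<close> forces this to be all of both spokes.\<close>
lemma spokes_reachable_from_sector:
  assumes "T \<subseteq> U" "sector a \<inter> U = {}" "v \<in> sector a"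
  shows "spoke a \<union> spoke (a + 1) \<subseteq> {y. reach_in E (V - U) v y} \<union> U"
proof -
  define Q where "Q = {y. reach_in E (V - U) v y} \<union> U"
  define N where "N = T \<union> (spoke a \<inter> Q) \<union> (spoke (a + 1) \<inter> Q)"
  define X where "X = {y. reach_in E (V - U) v y} \<inter> sector a"
  have sector_N: "sector b \<inter> N = {}" for b
    unfolding N_def using T_disjoint_sector spoke_disjoint_sector by blast
  have "disconnects V E N X"
  proof (rule disconnectsI)
    have "v \<in> V - U"
      using assms(2,3) sector_subset_V by blast
    then have "v \<in> X"
      using assms(3) by (simp add: X_def reach_in_refl)
    then show "X \<noteq> {}"
      by blast
    show "X \<subseteq> V - N"
      using sector_subset_V sector_N by (auto simp: X_def)
    obtain z where z: "z \<in> sector (a + 2)"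
      using sector_nonempty by blast
    have "sector (a + 2) \<inter> sector (a + 0) = {}"
      using four_le_w by (intro sector_offsets_disjoint) auto
    then have "z \<notin> X"
      using z by (auto simp: X_def)
    moreover have "z \<in> V - N"
      using z sector_subset_V sector_N by blast
    ultimately show "V - (N \<union> X) \<noteq> {}"
      by blast
  next
    fix p q assume p: "p \<in> X" and q: "q \<in> V - N" and pq: "(p, q) \<in> E"
    then have "q \<in> sector a \<union> spoke a \<union> spoke (a + 1)"
      using sector_neighbour by (auto simp: X_def N_def)
    moreover have "p \<in> V - U" "reach_in E (V - U) v p"
      using p assms(2) sector_subset_V by (auto simp: X_def)
    then have "q \<notin> U \<Longrightarrow> reach_in E (V - U) v q"
      using q pq by (blast intro: reach_in_trans reach_in_edge)
    ultimately show "q \<in> X"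
      using q assms(2) by (auto simp: X_def N_def Q_def)
  qed
  then have "kappa V E \<le> card N"
    using T_subset_V spoke_subset_V finite_V
    by (intro kappa_le_card_cut is_cut_if_disconnects) (auto simp: N_def)
  also have "\<dots> \<le> card (T \<union> (spoke a \<inter> Q)) + card (spoke (a + 1) \<inter> Q)"
    unfolding N_def by (rule card_Un_le)
  also have "\<dots> \<le> card T + card (spoke a \<inter> Q) + card (spoke (a + 1) \<inter> Q)"
    using card_Un_le[of T "spoke a \<inter> Q"] by simp
  finally have "card (spoke a) + card (spoke (a + 1)) \<le> card (spoke a \<inter> Q) + card (spoke (a + 1) \<inter> Q)"
    using card_spoke[of a] card_spoke[of "a + 1"] by linarith
  moreover have le: "card (spoke b \<inter> Q) \<le> card (spoke b)" for b
    using finite_spoke by (rule card_mono) auto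
  ultimately have "card (spoke a \<inter> Q) = card (spoke a)" "card (spoke (a + 1) \<inter> Q) = card (spoke (a + 1))"
    using le[of a] le[of "a + 1"] by linarith+
  then have "spoke a \<inter> Q = spoke a" "spoke (a + 1) \<inter> Q = spoke (a + 1)"
    using card_subset_eq[OF finite_spoke Int_lower1] by blast+
  then show ?thesis
    unfolding Q_def by blast
qed

lemma linked_block:
  assumes "T \<subseteq> U" and disjoint: "(sector a \<union> spoke (a + 1) \<union> sector (a + 1)) \<inter> U = {}"
  shows "linked_in E (V - U) (sector a \<union> spoke (a + 1) \<union> sector (a + 1))"
proof -
  let ?reach = "reach_in E (V - U)"
  obtain u where u: "u \<in> spoke (a + 1)"
    using spoke_nonempty by blast
  have "sector a \<inter> U = {}" "sector (a + 1) \<inter> U = {}" "u \<notin> U"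
    using disjoint u by blast+
  then have to_u: "?reach y u" if "y \<in> sector a \<union> sector (a + 1)" for y
    using spokes_reachable_from_sector[OF assms(1), of a y] spokes_reachable_from_sector[OF assms(1), of "a + 1" y]
      that u by blast
  obtain v where v: "v \<in> sector a"
    using sector_nonempty by blast
  have "?reach y u" if "y \<in> spoke (a + 1)" for y
  proof -
    have "y \<notin> U"
      using disjoint that by blast
    then have "?reach v y"
      using spokes_reachable_from_sector[OF assms(1) \<open>sector a \<inter> U = {}\<close> v] that by blast
    then have "?reach y v"
      by (rule reach_in_sym[OF sym_E])
    moreover have "?reach v u"
      using to_u v by blast
    ultimately show ?thesis
      by (rule reach_in_trans)
  qed
  with to_u have block_to_u: "?reach y u" if "y \<in> sector a \<union> spoke (a + 1) \<union> sector (a + 1)" for y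
    using that by blast
  show ?thesis
    unfolding linked_in_def
  proof (intro ballI)
    fix x y
    assume "x \<in> sector a \<union> spoke (a + 1) \<union> sector (a + 1)" "y \<in> sector a \<union> spoke (a + 1) \<union> sector (a + 1)"
    then have "?reach x u" "?reach u y"
      using block_to_u reach_in_sym[OF sym_E] by blast+
    then show "?reach x y"
      by (rule reach_in_trans)
  qed
qed

lemma linked_arc:
  assumes "2 \<le> m" "m < w"
  shows "linked_in E (V - (spoke i \<union> T \<union> spoke (i + m))) (arc i m)"
proof -
  let ?U = "spoke i \<union> T \<union> spoke (i + m)"
  let ?block = "\<lambda>n. sector (i + n) \<union> spoke (i + n + 1) \<union> sector (i + n + 1)"
  have block: "linked_in E (V - ?U) (?block n)" if "n + 1 < m" for n
  proof (rule linked_block)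
    have "spoke (i + n + 1) \<subseteq> arc i m"
      using spoke_subset_arc[of "n + 1" m i] that by (simp add: add.assoc)
    then show "?block n \<inter> ?U = {}"
      using arc_disjoint_ends[OF assms(2), of i] T_disjoint_sector spoke_disjoint_sector by blast
  qed auto
  have prefix: "linked_in E (V - ?U) (arc i (n + 1))" if "n < m" for n
    using that
  proof (induction n)
    case 0
    then show ?case
      using block[of 0] assms(1) arc_one[of i, unfolded One_nat_def] by (auto intro: linked_in_subset)
  next
    case (Suc n)
    have "arc i (Suc (Suc n)) = arc i (Suc n) \<union> spoke (i + Suc n) \<union> sector (i + Suc n)"
      by (rule arc_Suc) simp
    then have arc_eq: "arc i (Suc n + 1) = arc i (n + 1) \<union> ?block n"
      using sector_subset_arc[of n "n + 1" i] by auto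
    obtain z where "z \<in> sector (i + n)"
      using sector_nonempty by blast
    then have "z \<in> arc i (n + 1) \<inter> ?block n"
      using sector_subset_arc[of n "n + 1" i] by auto
    then have "arc i (n + 1) \<inter> ?block n \<noteq> {}"
      by blast
    moreover have "linked_in E (V - ?U) (arc i (n + 1))" "linked_in E (V - ?U) (?block n)"
      using Suc block[of n] by simp_all
    ultimately show ?case
      unfolding arc_eq by (rule linked_in_Un[rotated 2])
  qed
  have "m - 1 + 1 = m"
    using assms by simp
  with prefix[of "m - 1"] show ?thesis
    using assms by simp
qed

lemma arc_cover:
  assumes "m \<le> w"
  shows "V - (spoke i \<union> T \<union> spoke (i + m)) \<subseteq> arc i m \<union> arc (i + m) (w - m)"
proof
  fix x assume x: "x \<in> V - (spoke i \<union> T \<union> spoke (i + m))"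
  then obtain k where k: "k < w" "x \<in> spoke (i + k) \<union> sector (i + k)"
    using V_eq[of i] by blast
  show "x \<in> arc i m \<union> arc (i + m) (w - m)"
  proof (cases "k < m")
    case True
    then show ?thesis
      using k x spoke_subset_arc_ends[of k m i] sector_subset_arc[of k m i] by auto
  next
    case False
    define l where "l = k - m"
    have l: "k = m + l" "l < w - m"
      using False k(1) by (simp_all add: l_def)
    have "i + m + (w - m) = i + w"
      using assms by simp
    then have "spoke (i + k) \<subseteq> arc (i + m) (w - m) \<union> spoke (i + m) \<union> spoke i"
      using spoke_subset_arc_ends[of l "w - m" "i + m"] l by (simp add: add.assoc)
    moreover have "sector (i + k) \<subseteq> arc (i + m) (w - m)"
      using sector_subset_arc[of l "w - m" "i + m"] l by (simp add: add.assoc)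
    ultimately show ?thesis
      using k x by auto
  qed
qed

lemma sides_ends:
  assumes "2 \<le> m" "m \<le> w - 2"
  shows "sides V E (spoke i \<union> T \<union> spoke (i + m)) = {arc i m, arc (i + m) (w - m)}"
proof -
  let ?U = "spoke i \<union> T \<union> spoke (i + m)"
  have m: "0 < m" "m < w" "0 < w - m" "w - m < w" "2 \<le> w - m"
    using assms four_le_w by auto
  have "i + m + (w - m) = i + w"
    using m by simp
  then have U: "spoke (i + m) \<union> T \<union> spoke (i + m + (w - m)) = ?U"
    by auto
  show ?thesis
    unfolding sides_def
  proof (rule components_on_eq_pair)
    show "V - ?U = arc i m \<union> arc (i + m) (w - m)"
    proof
      show "V - ?U \<subseteq> arc i m \<union> arc (i + m) (w - m)"
        using m(2) by (intro arc_cover) simp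
      show "arc i m \<union> arc (i + m) (w - m) \<subseteq> V - ?U"
        using arc_subset_V arc_disjoint_ends[OF m(2), of i] arc_disjoint_ends[OF m(4), of "i + m", unfolded U]
        by blast
    qed
    show "arc i m \<noteq> {}" "arc (i + m) (w - m) \<noteq> {}"
      using disconnects_arc[OF m(1,2)] disconnects_arc[OF m(3,4)] by (simp_all add: disconnects_def)
    show "linked_in E (V - ?U) (arc i m)"
      using linked_arc[OF assms(1) m(2)] .
    show "linked_in E (V - ?U) (arc (i + m) (w - m))"
      using linked_arc[OF m(5,4), of "i + m", unfolded U] .
    show "b \<in> arc i m" if "a \<in> arc i m" "b \<in> V - ?U" "(a, b) \<in> E" for a b
      using arc_closed that by blast
    show "b \<in> arc (i + m) (w - m)" if "a \<in> arc (i + m) (w - m)" "b \<in> V - ?U" "(a, b) \<in> E" for a b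
      using arc_closed[of a "i + m" "w - m" b, unfolded U] that by blast
  qed
qed

lemma offset_pos_iff: "0 < offset i j \<longleftrightarrow> i mod w \<noteq> j mod w"
  using offset_pos by (auto simp: offset_def)

lemma DD_swap:
  assumes "i mod w \<noteq> j mod w"
  shows "DD w C S j i = arc (i + offset i j) (w - offset i j)"
proof -
  have "arc j m = arc (i + offset i j) m" for m
    using arc_mod[of j m] arc_mod[of "i + offset i j" m] add_offset_mod[of i j] by simp
  then show ?thesis
    using offset_swap[OF assms] by (simp add: DD_eq_arc)
qed

lemma cut_CC:
  assumes "i mod w \<noteq> j mod w"
  shows "kappa_cut V E (CC w T C i j) \<and> disconnects V E (CC w T C i j) (DD w C S i j)"
  using kappa_cut_ends[OF assms] disconnects_arc[of "offset i j" i] offset_pos[OF assms] offset_less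
  by (simp add: CC_eq_spokes DD_eq_arc)

lemma sides_CC:
  assumes "2 \<le> offset i j" "offset i j \<le> w - 2"
  shows "sides V E (CC w T C i j) = {DD w C S i j, DD w C S j i}"
proof -
  have "i mod w \<noteq> j mod w"
    using assms(1) offset_pos_iff[of i j] by simp
  then show ?thesis
    using sides_ends[OF assms, of i] DD_swap by (simp add: CC_eq_spokes DD_eq_arc[of i j])
qed

lemma card_C:
  assumes "k < w"
  shows "2 * real (card (C k)) + real (card T) = real (kappa V E)"
proof -
  have "2 * card (C k) + card T = kappa V E"
    using card_spoke[of k] assms by (simp add: spoke_def)
  then show ?thesis
    by (metis of_nat_add of_nat_mult of_nat_numeral)
qed

end

theorem lemma3:
  fixes V :: "'a set" and E :: "('a \<times> 'a) set" and w :: nat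
    and T :: "'a set" and C S :: "nat \<Rightarrow> 'a set"
  assumes "simple_graph V E"
    and "connected_on E V"
    and "\<not> complete_graph V E"
    and "is_wheel V E w T C S"
  shows "(\<forall>i<w. \<forall>j<w. i \<noteq> j \<longrightarrow>
            kappa_cut V E (CC w T C i j) \<and> disconnects V E (CC w T C i j) (DD w C S i j))
       \<and> (\<forall>i<w. \<forall>j<w. i \<noteq> j \<and> (j + w - i) mod w \<noteq> 1 \<and> (j + w - i) mod w \<noteq> w - 1 \<longrightarrow>
            sides V E (CC w T C i j) = {DD w C S i j, DD w C S j i})
       \<and> (\<forall>i<w. real (card (C i)) = (real (kappa V E) - real (card T)) / 2)"
proof -
  interpret wheel V E w T C S
    using assms(1,4) by unfold_locales
  have offset: "offset i j = (j + w - i) mod w" "offset i j < w" if "i < w" "j < w" for i j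
    using that offset_less by (simp_all add: offset_def)
  show ?thesis
  proof (intro conjI allI impI)
    fix i j assume "i < w" "j < w" "i \<noteq> j"
    then have "i mod w \<noteq> j mod w"
      by simp
    then show "kappa_cut V E (CC w T C i j)" "disconnects V E (CC w T C i j) (DD w C S i j)"
      by (simp_all add: cut_CC)
  next
    fix i j assume ij: "i < w" "j < w"
      and excluded: "i \<noteq> j \<and> (j + w - i) mod w \<noteq> 1 \<and> (j + w - i) mod w \<noteq> w - 1"
    then have "0 < offset i j"
      using offset_pos_iff[of i j] by simp
    then show "sides V E (CC w T C i j) = {DD w C S i j, DD w C S j i}"
      using offset[OF ij] excluded by (intro sides_CC) linarith+
  next
    fix i assume "i < w"
    from card_C[OF this] show "real (card (C i)) = (real (kappa V E) - real (card T)) / 2"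
      by simp
  qed
qed

end
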